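(* Fix $\theta,E$, $0<\varepsilon<1/7$, $0<\hat\rho<1/2$, $\ell\in\mathbb{N}$ and $1<\gamma\le|\log\varepsilon|$; set $M=\max\{\ell,|\log\hat\rho|\}$, let $\hat\ell\in\mathbb{N}$ with $\hat\ell>16|\log\varepsilon|M$, and let $\check\gamma=\gamma-6|\log\varepsilon|M/\hat\ell$. Suppose the finite interval $\hat\Lambda\subset\mathbb{Z}$ is partitioned by $\mathcal{P}$ into consecutive intervals $\Lambda_l\cup\Lambda\cup\Lambda_r$ (left to right) such that: (1) $\Lambda_l$ and $\Lambda_r$ each satisfy the Green's function decay property for $(\ell,\gamma)$; (2) $R^{\hat\Lambda}=(H^{\hat\Lambda}(\theta)-E)^{-1}$ is well defined and, writing $\Lambda=[a,b]$ and $P$ for the coordinate projection onto $[a-\ell,b+\ell]\cap\hat\Lambda$, one has $\|P R^{\hat\Lambda}\Gamma^{\hat\Lambda}_{\mathcal{P}}\|\le 2\hat\rho^{-1}$; (3) $|\Lambda|\le M$. Then $\hat\Lambda$ satisfies the Green's function decay property for $(\hat\ell,\check\gamma)$.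
   Context: $H^{\Lambda}(\theta)$ is the Dirichlet restriction to a finite interval $\Lambda\subset\mathbb{Z}$ of $H=\varepsilon\Delta+V$, $(H\psi)(n)=\varepsilon(\psi(n+1)+\psi(n-1))+V_n\psi(n)$, with $V_n=v(\theta+n\alpha)$ a real bounded potential: a tridiagonal symmetric matrix with diagonal $V_m$, $m\in\Lambda$, and off-diagonal entries $\varepsilon$. For a partition $\mathcal{P}$ of $\Lambda$ into consecutive intervals $\Lambda_j$, $H^\Lambda_{\mathcal P}=\bigoplus_j H^{\Lambda_j}$ and $\Gamma^\Lambda_{\mathcal P}=H^\Lambda-H^\Lambda_{\mathcal P}$ (the $\varepsilon$ hopping terms connecting adjacent blocks); $R^\Lambda=(H^\Lambda-E)^{-1}$, $R^\Lambda(m,n)=\langle\delta_m,R^\Lambda\delta_n\rangle$. An interval $\Lambda$ satisfies the Green's function decay property for $(\ell,\gamma)$ (at the given $\theta,E$) if $E\notin\operatorname{spec}H^\Lambda(\theta)$ and $\log|R^\Lambda(m,n)|\le-\gamma|m-n|$ for all $m,n\in\Lambda$ with $|m-n|\ge\ell$. *)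

theory Defs
  imports Complex_Main
begin

text \<open>Operators on l^2(S) for a finite set S of integers are represented by their
matrix entries A :: int => int => real (entries outside S x S are ignored/zero).\<close>

definition pot :: "(real \<Rightarrow> real) \<Rightarrow> real \<Rightarrow> real \<Rightarrow> int \<Rightarrow> real" where
  "pot v \<alpha> \<theta> n = v (\<theta> + real_of_int n * \<alpha>)"

definition Hrestr :: "real \<Rightarrow> (int \<Rightarrow> real) \<Rightarrow> int set \<Rightarrow> int \<Rightarrow> int \<Rightarrow> real" where
  "Hrestr \<epsilon> V \<Lambda> m n =
     (if m \<in> \<Lambda> \<and> n \<in> \<Lambda> then
        (if m = n then V m else if \<bar>m - n\<bar> = 1 then \<epsilon> else 0)
      else 0)"

definition matmul :: "int set \<Rightarrow> (int \<Rightarrow> int \<Rightarrow> real) \<Rightarrow> (int \<Rightarrow> int \<Rightarrow> real) \<Rightarrow> int \<Rightarrow> int \<Rightarrow> real" where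
  "matmul S A B m n = (\<Sum>k\<in>S. A m k * B k n)"

definition in_spec :: "int set \<Rightarrow> (int \<Rightarrow> int \<Rightarrow> real) \<Rightarrow> real \<Rightarrow> bool" where
  "in_spec S A E \<longleftrightarrow> (\<exists>\<psi> :: int \<Rightarrow> real. (\<exists>n\<in>S. \<psi> n \<noteq> 0) \<and>
       (\<forall>m\<in>S. (\<Sum>n\<in>S. A m n * \<psi> n) = E * \<psi> m))"

text \<open>Resolvent R^Lambda = (H^Lambda - E)^{-1}, as the unique matrix on Lambda x Lambda
  inverting H^Lambda - E (meaningful when E is not in the spectrum).\<close>
definition resolvent :: "real \<Rightarrow> (int \<Rightarrow> real) \<Rightarrow> int set \<Rightarrow> real \<Rightarrow> int \<Rightarrow> int \<Rightarrow> real" where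
  "resolvent \<epsilon> V \<Lambda> E = (THE G. (\<forall>m n. (m \<notin> \<Lambda> \<or> n \<notin> \<Lambda>) \<longrightarrow> G m n = 0) \<and>
      (\<forall>m\<in>\<Lambda>. \<forall>n\<in>\<Lambda>.
         (\<Sum>k\<in>\<Lambda>. (Hrestr \<epsilon> V \<Lambda> m k - (if m = k then E else 0)) * G k n)
           = (if m = n then 1 else 0)))"

text \<open>Green's function decay property for (ell, gamma). The condition
  log |R(m,n)| <= -gamma |m-n| is written as |R(m,n)| <= exp(-gamma |m-n|)
  (equivalent, with the convention log 0 = -infinity).\<close>
definition GFD :: "real \<Rightarrow> (int \<Rightarrow> real) \<Rightarrow> int set \<Rightarrow> real \<Rightarrow> nat \<Rightarrow> real \<Rightarrow> bool" where
  "GFD \<epsilon> V \<Lambda> E l \<gamma> \<longleftrightarrow> \<not> in_spec \<Lambda> (Hrestr \<epsilon> V \<Lambda>) E \<and>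
     (\<forall>m\<in>\<Lambda>. \<forall>n\<in>\<Lambda>. \<bar>m - n\<bar> \<ge> int l \<longrightarrow>
        \<bar>resolvent \<epsilon> V \<Lambda> E m n\<bar> \<le> exp (- \<gamma> * real_of_int \<bar>m - n\<bar>))"

definition Hpart :: "real \<Rightarrow> (int \<Rightarrow> real) \<Rightarrow> int set list \<Rightarrow> int \<Rightarrow> int \<Rightarrow> real" where
  "Hpart \<epsilon> V P m n = (\<Sum>J\<leftarrow>P. Hrestr \<epsilon> V J m n)"

definition Gammap :: "real \<Rightarrow> (int \<Rightarrow> real) \<Rightarrow> int set \<Rightarrow> int set list \<Rightarrow> int \<Rightarrow> int \<Rightarrow> real" where
  "Gammap \<epsilon> V \<Lambda> P m n = Hrestr \<epsilon> V \<Lambda> m n - Hpart \<epsilon> V P m n"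

definition proj :: "int set \<Rightarrow> int \<Rightarrow> int \<Rightarrow> real" where
  "proj T m n = (if m = n \<and> m \<in> T then 1 else 0)"

text \<open>Operator norm on l^2(S) (real Euclidean norm; for real matrices this equals
  the complex l^2 operator norm).\<close>
definition opnorm :: "int set \<Rightarrow> (int \<Rightarrow> int \<Rightarrow> real) \<Rightarrow> real" where
  "opnorm S A = Sup {sqrt (\<Sum>m\<in>S. (\<Sum>n\<in>S. A m n * x n)\<^sup>2) | x. (\<Sum>n\<in>S. (x n)\<^sup>2) \<le> 1}"

end

(* Expanding the Green's function G of [a0, b1] across the bonds (a - 1, a) and (b, b + 1)
   by the geometric resolvent identity writes G(m, n), for m in an outer block, through the
   decaying Green's function of that block and a boundary entry G(a, n) or G(b, n).  The
   operator norm hypothesis bounds the boundary entries by 2 / (\<rho> \<epsilon>) on rows within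
   distance l of [a, b], and one further expansion shows that they decay away from [a, b].  Altogether
   |G(m, n)| \<le> (1 + 2 / \<rho>)^2 exp (- \<gamma> (|m - n| - 2 M)); the constant and the loss 2 M are
   absorbed into the rate \<gamma> - 6 |log \<epsilon>| M / lh because lh > 16 |log \<epsilon>| M. *)

theory Submission
  imports Defs "Jordan_Normal_Form.Determinant"
begin

lemma sum_mult_delta_right:
  "finite S \<Longrightarrow> (\<Sum>j\<in>S. f j * (if j = n then 1 else 0 :: real)) = (if n \<in> S then f n else 0)"
  by (simp add: if_distrib[of "\<lambda>x. _ * x"] cong: if_cong)

lemma sum_mult_delta_left:
  "finite S \<Longrightarrow> (\<Sum>j\<in>S. (if m = j then 1 else 0 :: real) * f j) = (if m \<in> S then f m else 0)"
  by (simp add: if_distrib[of "\<lambda>x. x * _"] cong: if_cong)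

definition Hminus :: "real \<Rightarrow> (int \<Rightarrow> real) \<Rightarrow> int set \<Rightarrow> real \<Rightarrow> int \<Rightarrow> int \<Rightarrow> real" where
  "Hminus \<epsilon> V S E m k = Hrestr \<epsilon> V S m k - (if m = k then E else 0)"

definition right_inverse_on :: "int set \<Rightarrow> (int \<Rightarrow> int \<Rightarrow> real) \<Rightarrow> (int \<Rightarrow> int \<Rightarrow> real) \<Rightarrow> bool" where
  "right_inverse_on S A G \<longleftrightarrow> (\<forall>m n. (m \<notin> S \<or> n \<notin> S) \<longrightarrow> G m n = 0) \<and>
     (\<forall>m\<in>S. \<forall>n\<in>S. (\<Sum>k\<in>S. A m k * G k n) = (if m = n then 1 else 0))"

lemma resolvent_eq_The: "resolvent \<epsilon> V S E = (THE G. right_inverse_on S (Hminus \<epsilon> V S E) G)"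
  by (simp add: resolvent_def right_inverse_on_def Hminus_def)

lemma Hminus_sym: "Hminus \<epsilon> V S E m k = Hminus \<epsilon> V S E k m"
  by (auto simp: Hminus_def Hrestr_def abs_minus_commute)

lemma Hminus_injective:
  assumes fin: "finite S" and ns: "\<not> in_spec S (Hrestr \<epsilon> V S) E"
    and ker: "\<forall>m\<in>S. (\<Sum>n\<in>S. Hminus \<epsilon> V S E m n * \<psi> n) = 0"
  shows "\<forall>n\<in>S. \<psi> n = 0"
proof -
  have "(\<Sum>n\<in>S. Hrestr \<epsilon> V S m n * \<psi> n) = E * \<psi> m" if m: "m \<in> S" for m
  proof -
    have "(\<Sum>n\<in>S. Hminus \<epsilon> V S E m n * \<psi> n)
        = (\<Sum>n\<in>S. Hrestr \<epsilon> V S m n * \<psi> n) - E * \<psi> m"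
      using fin m
      by (simp add: Hminus_def left_diff_distrib sum_subtractf if_distrib[of "\<lambda>x. x * _"] cong: if_cong)
    thus ?thesis using ker m by simp
  qed
  thus ?thesis using ns unfolding in_spec_def by blast
qed

lemma left_inverse_eq_right_inverse:
  assumes fin: "finite S"
    and L_outside: "\<forall>m n. (m \<notin> S \<or> n \<notin> S) \<longrightarrow> L m n = 0"
    and L: "\<forall>m\<in>S. \<forall>n\<in>S. (\<Sum>k\<in>S. L m k * A k n) = (if m = n then 1 else 0)"
    and R: "right_inverse_on S A R"
  shows "L = R"
proof (intro ext)
  fix m n
  show "L m n = R m n"
  proof (cases "m \<in> S \<and> n \<in> S")
    case False
    thus ?thesis using L_outside R unfolding right_inverse_on_def by auto
  next
    case True
    have "L m n = (\<Sum>j\<in>S. L m j * (if j = n then 1 else 0))"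
      using fin True by (simp add: sum_mult_delta_right)
    also have "\<dots> = (\<Sum>j\<in>S. L m j * (\<Sum>k\<in>S. A j k * R k n))"
      using R True unfolding right_inverse_on_def by (intro sum.cong) auto
    also have "\<dots> = (\<Sum>j\<in>S. \<Sum>k\<in>S. L m j * A j k * R k n)"
      by (simp add: sum_distrib_left mult.assoc)
    also have "\<dots> = (\<Sum>k\<in>S. \<Sum>j\<in>S. L m j * A j k * R k n)"
      by (rule sum.swap)
    also have "\<dots> = (\<Sum>k\<in>S. (\<Sum>j\<in>S. L m j * A j k) * R k n)"
      by (simp add: sum_distrib_right)
    also have "\<dots> = (\<Sum>k\<in>S. (if m = k then 1 else 0) * R k n)"
      using L True by (intro sum.cong) auto
    also have "\<dots> = R m n"
      using fin True by (simp add: sum_mult_delta_left)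
    finally show ?thesis .
  qed
qed

lemma index_mult_mat_sum:
  assumes "(A :: real mat) \<in> carrier_mat N N" "B \<in> carrier_mat N N" "i < N" "j < N"
  shows "(A * B) $$ (i, j) = (\<Sum>k<N. A $$ (i, k) * B $$ (k, j))"
  using assms by (simp add: scalar_prod_def lessThan_atLeast0)

lemma matrix_inverse_exists:
  fixes A :: "int \<Rightarrow> int \<Rightarrow> real"
  assumes fin: "finite S"
    and inj: "\<And>\<psi>. \<forall>m\<in>S. (\<Sum>n\<in>S. A m n * \<psi> n) = 0 \<Longrightarrow> \<forall>n\<in>S. \<psi> n = 0"
  obtains G where "right_inverse_on S A G"
    and "\<forall>m\<in>S. \<forall>n\<in>S. (\<Sum>k\<in>S. G m k * A k n) = (if m = n then 1 else 0)"
proof -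
  define N where "N = card S"
  obtain f where f: "bij_betw f {..<N} S"
    using ex_bij_betw_nat_finite[OF fin] N_def by (metis lessThan_atLeast0)
  define g where "g = the_inv_into {..<N} f"
  have g: "g m < N" "f (g m) = m" if "m \<in> S" for m
    using f that unfolding g_def bij_betw_def
    by (metis lessThan_iff the_inv_into_into subset_refl, metis f_the_inv_into_f)
  have g_f: "g (f i) = i" if "i < N" for i
    using f that unfolding g_def bij_betw_def by (simp add: the_inv_into_f_f)
  have f_S: "f i \<in> S" if "i < N" for i
    using f that bij_betwE by blast
  have g_eq_iff: "g m = g n \<longleftrightarrow> m = n" if "m \<in> S" "n \<in> S" for m n
    using g(2) that by metis
  have reindex: "(\<Sum>k\<in>S. h k) = (\<Sum>i<N. h (f i))" for h :: "int \<Rightarrow> real"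
    using sum.reindex_bij_betw[OF f] by metis
  define Am :: "real mat" where "Am = mat N N (\<lambda>(i, j). A (f i) (f j))"
  have Am: "Am \<in> carrier_mat N N"
    unfolding Am_def by simp
  have "det Am \<noteq> 0"
  proof
    assume "det Am = 0"
    then obtain v where v: "v \<in> carrier_vec N" "v \<noteq> 0\<^sub>v N" "Am *\<^sub>v v = 0\<^sub>v N"
      using det_0_iff_vec_prod_zero_field[OF Am] by auto
    have "\<forall>m\<in>S. (\<Sum>n\<in>S. A m n * v $ g n) = 0"
    proof
      fix m assume m: "m \<in> S"
      have "(\<Sum>n\<in>S. A m n * v $ g n) = (\<Sum>i<N. A m (f i) * v $ i)"
        unfolding reindex using g_f by simp
      also have "\<dots> = (Am *\<^sub>v v) $ g m"
        using g[OF m] v(1) unfolding Am_def by (simp add: scalar_prod_def atLeast0LessThan)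
      also have "\<dots> = 0"
        using v(3) g[OF m] by simp
      finally show "(\<Sum>n\<in>S. A m n * v $ g n) = 0" .
    qed
    from inj[OF this] have "v $ i = 0" if "i < N" for i
      using f_S g_f that by metis
    hence "v = 0\<^sub>v N"
      using v(1) by (intro eq_vecI) auto
    with v(2) show False by simp
  qed
  then obtain B where B: "B \<in> carrier_mat N N" "B * Am = 1\<^sub>m N" "Am * B = 1\<^sub>m N"
    using det_non_zero_imp_unit[OF Am, of "()"] unfolding Units_def ring_mat_def by auto
  define G where "G m n = (if m \<in> S \<and> n \<in> S then B $$ (g m, g n) else 0)" for m n
  have "\<forall>m\<in>S. \<forall>n\<in>S. (\<Sum>k\<in>S. A m k * G k n) = (if m = n then 1 else 0)"
  proof (intro ballI)
    fix m n assume m: "m \<in> S" and n: "n \<in> S"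
    have "(\<Sum>k\<in>S. A m k * G k n) = (\<Sum>i<N. A m (f i) * B $$ (i, g n))"
      unfolding reindex G_def using g_f f_S n by simp
    also have "\<dots> = (\<Sum>i<N. Am $$ (g m, i) * B $$ (i, g n))"
      using g[OF m] unfolding Am_def by simp
    also have "\<dots> = (Am * B) $$ (g m, g n)"
      using index_mult_mat_sum[OF Am B(1) g(1)[OF m] g(1)[OF n]] by simp
    also have "\<dots> = (if m = n then 1 else 0)"
      unfolding B(3) using g(1) m n g_eq_iff by (simp only: index_one_mat)
    finally show "(\<Sum>k\<in>S. A m k * G k n) = (if m = n then 1 else 0)" .
  qed
  then have "right_inverse_on S A G"
    unfolding right_inverse_on_def G_def by auto
  moreover have "\<forall>m\<in>S. \<forall>n\<in>S. (\<Sum>k\<in>S. G m k * A k n) = (if m = n then 1 else 0)"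
  proof (intro ballI)
    fix m n assume m: "m \<in> S" and n: "n \<in> S"
    have "(\<Sum>k\<in>S. G m k * A k n) = (\<Sum>i<N. B $$ (g m, i) * A (f i) n)"
      unfolding reindex G_def using g_f f_S m by simp
    also have "\<dots> = (\<Sum>i<N. B $$ (g m, i) * Am $$ (i, g n))"
      using g[OF n] unfolding Am_def by simp
    also have "\<dots> = (B * Am) $$ (g m, g n)"
      using index_mult_mat_sum[OF B(1) Am g(1)[OF m] g(1)[OF n]] by simp
    also have "\<dots> = (if m = n then 1 else 0)"
      unfolding B(2) using g(1) m n g_eq_iff by (simp only: index_one_mat)
    finally show "(\<Sum>k\<in>S. G m k * A k n) = (if m = n then 1 else 0)" .
  qed
  ultimately show ?thesis by (rule that)
qed

lemma resolvent_inverse: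
  assumes fin: "finite S" and ns: "\<not> in_spec S (Hrestr \<epsilon> V S) E"
  shows "right_inverse_on S (Hminus \<epsilon> V S E) (resolvent \<epsilon> V S E)"
    and "\<forall>m\<in>S. \<forall>n\<in>S.
           (\<Sum>k\<in>S. resolvent \<epsilon> V S E m k * Hminus \<epsilon> V S E k n) = (if m = n then 1 else 0)"
proof -
  obtain G where G: "right_inverse_on S (Hminus \<epsilon> V S E) G"
    and G_left: "\<forall>m\<in>S. \<forall>n\<in>S. (\<Sum>k\<in>S. G m k * Hminus \<epsilon> V S E k n) = (if m = n then 1 else 0)"
    using matrix_inverse_exists[OF fin Hminus_injective[OF fin ns]] by blast
  have G_outside: "\<forall>m n. (m \<notin> S \<or> n \<notin> S) \<longrightarrow> G m n = 0"
    using G unfolding right_inverse_on_def by blast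
  have "resolvent \<epsilon> V S E = G"
    unfolding resolvent_eq_The
  proof (rule the_equality)
    fix G' assume "right_inverse_on S (Hminus \<epsilon> V S E) G'"
    thus "G' = G"
      using left_inverse_eq_right_inverse[OF fin G_outside G_left] by simp
  qed (fact G)
  thus "right_inverse_on S (Hminus \<epsilon> V S E) (resolvent \<epsilon> V S E)"
    and "\<forall>m\<in>S. \<forall>n\<in>S.
           (\<Sum>k\<in>S. resolvent \<epsilon> V S E m k * Hminus \<epsilon> V S E k n) = (if m = n then 1 else 0)"
    using G G_left by simp_all
qed

lemma resolvent_outside:
  assumes "finite S" "\<not> in_spec S (Hrestr \<epsilon> V S) E" "m \<notin> S \<or> n \<notin> S"
  shows "resolvent \<epsilon> V S E m n = 0"
  using resolvent_inverse(1)[OF assms(1,2)] assms(3) unfolding right_inverse_on_def by blast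

lemma resolvent_sym:
  assumes fin: "finite S" and ns: "\<not> in_spec S (Hrestr \<epsilon> V S) E"
  shows "resolvent \<epsilon> V S E n m = resolvent \<epsilon> V S E m n"
proof -
  let ?R = "resolvent \<epsilon> V S E" and ?A = "Hminus \<epsilon> V S E"
  note R = resolvent_inverse(1)[OF fin ns]
  have "(\<lambda>m n. ?R n m) = ?R"
  proof (rule left_inverse_eq_right_inverse[OF fin _ _ R])
    show "\<forall>m n. (m \<notin> S \<or> n \<notin> S) \<longrightarrow> ?R n m = 0"
      using resolvent_outside[OF fin ns] by blast
    show "\<forall>m\<in>S. \<forall>n\<in>S. (\<Sum>k\<in>S. ?R k m * ?A k n) = (if m = n then 1 else 0)"
    proof (intro ballI)
      fix m n assume "m \<in> S" "n \<in> S"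
      have "(\<Sum>k\<in>S. ?R k m * ?A k n) = (\<Sum>k\<in>S. ?A n k * ?R k m)"
        by (simp add: Hminus_sym[of \<epsilon> V S E _ n] mult.commute)
      thus "(\<Sum>k\<in>S. ?R k m * ?A k n) = (if m = n then 1 else 0)"
        using R \<open>m \<in> S\<close> \<open>n \<in> S\<close> unfolding right_inverse_on_def by auto
    qed
  qed
  thus ?thesis by metis
qed

lemma geometric_resolvent_identity:
  assumes fin: "finite S" and TS: "T \<subseteq> S" and c: "c \<in> T" and c': "c' \<in> S" "c' \<notin> T"
    and ns_S: "\<not> in_spec S (Hrestr \<epsilon> V S) E" and ns_T: "\<not> in_spec T (Hrestr \<epsilon> V T) E"
    and coupling: "\<forall>k\<in>T. \<forall>j\<in>S. j \<notin> T \<longrightarrow> Hrestr \<epsilon> V S k j = (if k = c \<and> j = c' then \<epsilon> else 0)"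
    and m: "m \<in> T" and n: "n \<in> S"
  shows "resolvent \<epsilon> V S E m n
           = resolvent \<epsilon> V T E m n - \<epsilon> * resolvent \<epsilon> V T E m c * resolvent \<epsilon> V S E c' n"
proof -
  have fin_T: "finite T" using fin TS finite_subset by blast
  define G where "G = resolvent \<epsilon> V S E"
  define R where "R = resolvent \<epsilon> V T E"
  have R_left: "(\<Sum>k\<in>T. R m k * Hminus \<epsilon> V T E k j) = (if m = j then 1 else 0)" if "j \<in> T" for j
    using resolvent_inverse(2)[OF fin_T ns_T] m that unfolding R_def by blast
  have inner: "(\<Sum>k\<in>T. R m k * Hminus \<epsilon> V S E k j)
      = (if j \<in> T then (if m = j then 1 else 0) else if j = c' then \<epsilon> * R m c else 0)"
    if j: "j \<in> S" for j
  proof (cases "j \<in> T")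
    case True
    have "(\<Sum>k\<in>T. R m k * Hminus \<epsilon> V S E k j) = (\<Sum>k\<in>T. R m k * Hminus \<epsilon> V T E k j)"
      using True TS by (intro sum.cong) (auto simp: Hminus_def Hrestr_def)
    thus ?thesis using R_left True by simp
  next
    case False
    have "(\<Sum>k\<in>T. R m k * Hminus \<epsilon> V S E k j)
        = (\<Sum>k\<in>T. if k = c then (if j = c' then R m c * \<epsilon> else 0) else 0)"
      using False coupling j by (intro sum.cong) (auto simp: Hminus_def)
    also have "\<dots> = (if j = c' then \<epsilon> * R m c else 0)"
      using fin_T c by simp
    finally show ?thesis using False by simp
  qed
  txt \<open>Multiply the identity (H^S - E) G = 1 from the left by R: apart from the single
    bond (c, c'), the rows of H^S - E indexed by T agree with those of H^T - E.\<close>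
  have "R m n = (\<Sum>k\<in>T. R m k * (if k = n then 1 else 0))"
    using resolvent_outside[OF fin_T ns_T, of m n] fin_T unfolding R_def
    by (simp add: sum_mult_delta_right)
  also have "\<dots> = (\<Sum>k\<in>T. R m k * (\<Sum>j\<in>S. Hminus \<epsilon> V S E k j * G j n))"
    using resolvent_inverse(1)[OF fin ns_S] n TS unfolding G_def right_inverse_on_def
    by (intro sum.cong) auto
  also have "\<dots> = (\<Sum>j\<in>S. (\<Sum>k\<in>T. R m k * Hminus \<epsilon> V S E k j) * G j n)"
    by (simp add: sum_distrib_left sum_distrib_right mult.assoc sum.swap[of _ T S])
  also have "\<dots> = (\<Sum>j\<in>S. (if j = m then G m n else 0) + (if j = c' then \<epsilon> * R m c * G c' n else 0))"
    using inner m c' by (intro sum.cong) auto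
  also have "\<dots> = G m n + \<epsilon> * R m c * G c' n"
    using fin m TS c' by (auto simp: sum.distrib)
  finally show ?thesis unfolding G_def R_def by simp
qed

lemma abs_entry_le_opnorm:
  assumes fin: "finite S" and m: "m \<in> S" and n: "n \<in> S"
  shows "\<bar>A m n\<bar> \<le> opnorm S A"
proof -
  define X where "X = {sqrt (\<Sum>m\<in>S. (\<Sum>n\<in>S. A m n * x n)\<^sup>2) | x. (\<Sum>n\<in>S. (x n)\<^sup>2) \<le> 1}"
  have "bdd_above X"
  proof (rule bdd_aboveI)
    fix y assume "y \<in> X"
    then obtain x where y: "y = sqrt (\<Sum>m\<in>S. (\<Sum>n\<in>S. A m n * x n)\<^sup>2)"
      and x: "(\<Sum>n\<in>S. (x n)\<^sup>2) \<le> 1"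
      unfolding X_def by blast
    have x_le_1: "\<bar>x k\<bar> \<le> 1" if "k \<in> S" for k
    proof -
      have "(x k)\<^sup>2 \<le> (\<Sum>n\<in>S. (x n)\<^sup>2)"
        using fin that by (intro member_le_sum) auto
      also have "\<dots> \<le> 1" by (fact x)
      finally show ?thesis by (simp add: abs_square_le_1)
    qed
    have "(\<Sum>n\<in>S. A m' n * x n)\<^sup>2 \<le> (\<Sum>n\<in>S. \<bar>A m' n\<bar>)\<^sup>2" for m'
    proof -
      have "\<bar>\<Sum>n\<in>S. A m' n * x n\<bar> \<le> (\<Sum>n\<in>S. \<bar>A m' n * x n\<bar>)"
        by (rule sum_abs)
      also have "\<dots> \<le> (\<Sum>n\<in>S. \<bar>A m' n\<bar>)"
        using x_le_1 by (intro sum_mono) (auto simp: abs_mult intro: mult_left_le)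
      finally have "\<bar>\<Sum>n\<in>S. A m' n * x n\<bar> \<le> \<bar>\<Sum>n\<in>S. \<bar>A m' n\<bar>\<bar>" by simp
      thus ?thesis using abs_le_square_iff by blast
    qed
    hence "(\<Sum>m\<in>S. (\<Sum>n\<in>S. A m n * x n)\<^sup>2) \<le> (\<Sum>m\<in>S. (\<Sum>n\<in>S. \<bar>A m n\<bar>)\<^sup>2)"
      by (intro sum_mono) auto
    thus "y \<le> sqrt (\<Sum>m\<in>S. (\<Sum>n\<in>S. \<bar>A m n\<bar>)\<^sup>2)"
      unfolding y by simp
  qed
  define e where "e k = (if k = n then 1 else 0 :: real)" for k
  have "(\<Sum>k\<in>S. (e k)\<^sup>2) = 1"
    using fin n by (simp add: e_def if_distrib[of "\<lambda>x. x\<^sup>2"] cong: if_cong)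
  hence e_in_X: "sqrt (\<Sum>m\<in>S. (\<Sum>k\<in>S. A m k * e k)\<^sup>2) \<in> X"
    unfolding X_def by auto
  have "\<bar>A m n\<bar> = sqrt ((A m n)\<^sup>2)" by simp
  also have "\<dots> \<le> sqrt (\<Sum>m'\<in>S. (A m' n)\<^sup>2)"
    using fin m by (intro real_sqrt_le_mono member_le_sum) auto
  also have "\<dots> = sqrt (\<Sum>m'\<in>S. (\<Sum>k\<in>S. A m' k * e k)\<^sup>2)"
    using fin n by (simp add: e_def sum_mult_delta_right)
  also have "\<dots> \<le> Sup X"
    using e_in_X \<open>bdd_above X\<close> by (rule cSup_upper)
  finally show ?thesis unfolding opnorm_def X_def .
qed

lemma abs_coupling_term_le:
  fixes \<epsilon> r g e K :: real
  assumes "0 < \<epsilon>" "\<bar>r\<bar> \<le> e" "\<bar>g\<bar> \<le> K / \<epsilon>"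
  shows "\<bar>\<epsilon> * r * g\<bar> \<le> K * e"
proof -
  have "\<bar>\<epsilon> * r * g\<bar> = \<epsilon> * (\<bar>r\<bar> * \<bar>g\<bar>)"
    using assms(1) by (simp add: abs_mult)
  also have "\<dots> \<le> \<epsilon> * (e * (K / \<epsilon>))"
    using assms by (intro mult_left_mono mult_mono) auto
  also have "\<dots> = K * e"
    using assms(1) by simp
  finally show ?thesis .
qed

text \<open>G, Rl and Rr stand for the Green's functions of [a0, b1], [a0, a - 1] and [b + 1, b1];
  G_near is what the operator norm hypothesis provides, with K = 2 / \<rho>.\<close>
locale three_block_resolvent =
  fixes \<epsilon> \<gamma> K :: real and l :: nat and a0 a b b1 :: int and G Rl Rr :: "int \<Rightarrow> int \<Rightarrow> real"
  assumes blocks: "a0 < a" "a \<le> b" "b < b1"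
    and eps: "0 < \<epsilon>" "\<epsilon> \<le> 1"
    and gamma_nonneg: "0 \<le> \<gamma>"
    and K_pos: "0 < K"
    and G_sym: "G n m = G m n"
    and Rl_outside: "y \<notin> {a0..a-1} \<Longrightarrow> Rl x y = 0"
    and Rr_outside: "y \<notin> {b+1..b1} \<Longrightarrow> Rr x y = 0"
    and Rl_decay: "\<lbrakk>x \<in> {a0..a-1}; y \<in> {a0..a-1}; int l \<le> \<bar>x - y\<bar>\<rbrakk>
                   \<Longrightarrow> \<bar>Rl x y\<bar> \<le> exp (- \<gamma> * of_int \<bar>x - y\<bar>)"
    and Rr_decay: "\<lbrakk>x \<in> {b+1..b1}; y \<in> {b+1..b1}; int l \<le> \<bar>x - y\<bar>\<rbrakk>
                   \<Longrightarrow> \<bar>Rr x y\<bar> \<le> exp (- \<gamma> * of_int \<bar>x - y\<bar>)"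
    and G_left: "\<lbrakk>m \<in> {a0..a-1}; n \<in> {a0..b1}\<rbrakk> \<Longrightarrow> G m n = Rl m n - \<epsilon> * Rl m (a-1) * G a n"
    and G_right: "\<lbrakk>m \<in> {b+1..b1}; n \<in> {a0..b1}\<rbrakk> \<Longrightarrow> G m n = Rr m n - \<epsilon> * Rr m (b+1) * G b n"
    and G_near: "\<lbrakk>c \<in> {a, b}; x \<in> {a0..b1}; a - int l \<le> x; x \<le> b + int l\<rbrakk>
                 \<Longrightarrow> \<bar>G c x\<bar> \<le> K / \<epsilon>"
begin

lemma decay_antimono: "s \<le> t \<Longrightarrow> exp (- \<gamma> * t) \<le> exp (- \<gamma> * s)"
  using gamma_nonneg by (simp add: mult_left_mono)

lemma decay_add: "exp (- \<gamma> * s) * exp (- \<gamma> * t) = exp (- \<gamma> * (s + t))"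
  by (simp add: ring_distribs flip: exp_add)

lemma scaled_decay_le:
  assumes "0 \<le> c" "c \<le> (1 + K)\<^sup>2" "s \<le> t"
  shows "c * exp (- \<gamma> * t) \<le> (1 + K)\<^sup>2 * exp (- \<gamma> * s)"
  using assms decay_antimono by (intro mult_mono) auto

lemma K_le_square: "K \<le> (1 + K)\<^sup>2" "1 + K \<le> (1 + K)\<^sup>2"
  using K_pos by (auto simp: power2_eq_square algebra_simps)

lemma Rl_decay_ordered:
  assumes "x \<in> {a0..a-1}" "y \<in> {a0..a-1}" "int l \<le> y - x"
  shows "\<bar>Rl x y\<bar> \<le> exp (- \<gamma> * of_int (y - x))"
  using Rl_decay[of x y] assms by (simp add: abs_minus_commute)

lemma Rr_decay_ordered:
  assumes "x \<in> {b+1..b1}" "y \<in> {b+1..b1}" "int l \<le> y - x"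
  shows "\<bar>Rr y x\<bar> \<le> exp (- \<gamma> * of_int (y - x))"
  using Rr_decay[of y x] assms by simp

lemma G_far_left:
  assumes c: "c \<in> {a, b}" and x: "x \<in> {a0..a-1}" "x < a - int l"
  shows "\<bar>G c x\<bar> \<le> K * exp (- \<gamma> * of_int (a - 1 - x))"
proof -
  have "G c x = - (\<epsilon> * Rl x (a-1) * G a c)"
    using G_left[OF x(1), of c] G_sym[of c x] Rl_outside[of c x] c blocks by auto
  moreover have "\<bar>Rl x (a-1)\<bar> \<le> exp (- \<gamma> * of_int (a - 1 - x))"
    using Rl_decay_ordered[of x "a-1"] x blocks by auto
  moreover have "\<bar>G a c\<bar> \<le> K / \<epsilon>"
    using G_near[of a c] c blocks by auto
  ultimately show ?thesis
    using abs_coupling_term_le[OF eps(1)] by simp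
qed

lemma G_far_right:
  assumes c: "c \<in> {a, b}" and x: "x \<in> {b+1..b1}" "b + int l < x"
  shows "\<bar>G c x\<bar> \<le> K * exp (- \<gamma> * of_int (x - (b + 1)))"
proof -
  have "G c x = - (\<epsilon> * Rr x (b+1) * G b c)"
    using G_right[OF x(1), of c] G_sym[of c x] Rr_outside[of c x] c blocks by auto
  moreover have "\<bar>Rr x (b+1)\<bar> \<le> exp (- \<gamma> * of_int (x - (b + 1)))"
    using Rr_decay_ordered[of "b+1" x] x blocks by auto
  moreover have "\<bar>G b c\<bar> \<le> K / \<epsilon>"
    using G_near[of b c] c blocks by auto
  ultimately show ?thesis
    using abs_coupling_term_le[OF eps(1)] by simp
qed

lemma G_boundary_bound:
  assumes c: "c \<in> {a, b}" and x: "x \<in> {a0..b1}"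
  shows "\<bar>G c x\<bar> \<le> K / \<epsilon>"
proof -
  have K_le: "K * exp (- \<gamma> * t) \<le> K / \<epsilon>" if "0 \<le> t" for t
  proof -
    have "K * exp (- \<gamma> * t) \<le> K * 1"
      using decay_antimono[OF that] K_pos by (intro mult_left_mono) auto
    also have "\<dots> \<le> K / \<epsilon>"
      using K_pos eps by (simp add: field_simps)
    finally show ?thesis .
  qed
  consider "x < a - int l" | "a - int l \<le> x \<and> x \<le> b + int l" | "b + int l < x"
    by linarith
  thus ?thesis
  proof cases
    case 1
    thus ?thesis using G_far_left[OF c, of x] K_le[of "of_int (a - 1 - x)"] x by auto
  next
    case 2
    thus ?thesis using G_near c x by blast
  next
    case 3
    thus ?thesis using G_far_right[OF c, of x] K_le[of "of_int (x - (b + 1))"] x blocks by auto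
  qed
qed

lemma G_decay_within_left:
  assumes "m \<in> {a0..a-1}" "n \<in> {a0..a-1}" "int l \<le> n - m"
  shows "\<bar>G m n\<bar> \<le> (1 + K) * exp (- \<gamma> * of_int (n - m))"
proof -
  have "\<bar>Rl m (a-1)\<bar> \<le> exp (- \<gamma> * of_int (a - 1 - m))"
    using Rl_decay_ordered[of m "a-1"] assms blocks by auto
  also have "\<dots> \<le> exp (- \<gamma> * of_int (n - m))"
    using assms by (intro decay_antimono) simp
  finally have "\<bar>\<epsilon> * Rl m (a-1) * G a n\<bar> \<le> K * exp (- \<gamma> * of_int (n - m))"
    using abs_coupling_term_le[OF eps(1)] G_boundary_bound[of a n] assms blocks by auto
  moreover have "\<bar>Rl m n\<bar> \<le> exp (- \<gamma> * of_int (n - m))"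
    using Rl_decay_ordered assms by blast
  ultimately show ?thesis
    using G_left[of m n] assms blocks by (auto simp: algebra_simps)
qed

lemma G_decay_within_right:
  assumes "m \<in> {b+1..b1}" "n \<in> {a0..b1}" "int l \<le> n - m"
  shows "\<bar>G m n\<bar> \<le> (1 + K) * exp (- \<gamma> * of_int (n - m))"
proof -
  have n: "n \<in> {b+1..b1}"
    using assms by auto
  have "\<bar>Rr n (b+1)\<bar> \<le> exp (- \<gamma> * of_int (n - (b + 1)))"
    using Rr_decay_ordered[of "b+1" n] assms n blocks by auto
  also have "\<dots> \<le> exp (- \<gamma> * of_int (n - m))"
    using assms by (intro decay_antimono) simp
  finally have "\<bar>\<epsilon> * Rr n (b+1) * G b m\<bar> \<le> K * exp (- \<gamma> * of_int (n - m))"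
    using abs_coupling_term_le[OF eps(1)] G_boundary_bound[of b m] assms blocks by auto
  moreover have "\<bar>Rr n m\<bar> \<le> exp (- \<gamma> * of_int (n - m))"
    using Rr_decay_ordered assms n by blast
  ultimately show ?thesis
    using G_right[OF n, of m] G_sym[of m n] assms blocks by (auto simp: algebra_simps)
qed

lemma G_decay_across_left:
  assumes m: "m \<in> {a0..a-1}" "m < a - int l" and n: "n \<in> {a..b1}"
    and M: "real l \<le> M" "of_int (b - a + 1) \<le> M"
  shows "\<bar>G m n\<bar> \<le> (1 + K)\<^sup>2 * exp (- \<gamma> * (of_int (n - m) - 2 * M))"
proof -
  have G_eq: "G m n = - (\<epsilon> * Rl m (a-1) * G a n)"
    using G_left[OF m(1), of n] Rl_outside[of n m] n blocks by auto
  have Rl_bound: "\<bar>Rl m (a-1)\<bar> \<le> exp (- \<gamma> * of_int (a - 1 - m))"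
    using Rl_decay_ordered[of m "a-1"] m blocks by auto
  show ?thesis
  proof (cases "n \<le> b + int l")
    case True
    have "\<bar>G m n\<bar> \<le> K * exp (- \<gamma> * of_int (a - 1 - m))"
      using G_eq abs_coupling_term_le[OF eps(1) Rl_bound] G_boundary_bound[of a n] n blocks by auto
    also have "\<dots> \<le> (1 + K)\<^sup>2 * exp (- \<gamma> * (of_int (n - m) - 2 * M))"
      using True M K_pos K_le_square by (intro scaled_decay_le) auto
    finally show ?thesis .
  next
    case False
    have G_an: "\<bar>G a n\<bar> \<le> K * exp (- \<gamma> * of_int (n - (b + 1)))"
      using G_far_right[of a n] False n by auto
    have "\<bar>G m n\<bar> = \<epsilon> * (\<bar>Rl m (a-1)\<bar> * \<bar>G a n\<bar>)"
      using G_eq eps by (simp add: abs_mult)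
    also have "\<dots> \<le> 1 * (exp (- \<gamma> * of_int (a - 1 - m)) * (K * exp (- \<gamma> * of_int (n - (b + 1)))))"
      using eps Rl_bound G_an by (intro mult_mono) auto
    also have "\<dots> = K * exp (- \<gamma> * (of_int (a - 1 - m) + of_int (n - (b + 1))))"
      by (simp only: mult_1 mult.left_commute[of _ K] decay_add)
    also have "\<dots> \<le> (1 + K)\<^sup>2 * exp (- \<gamma> * (of_int (n - m) - 2 * M))"
      using M blocks K_pos K_le_square by (intro scaled_decay_le) auto
    finally show ?thesis .
  qed
qed

lemma G_decay_from_centre:
  assumes m: "m \<in> {a0..b1}" "a - int l \<le> m" "m \<le> b" and n: "n \<in> {a0..b1}" "3 * M < of_int (n - m)"
    and M: "real l \<le> M" "of_int (b - a + 1) \<le> M"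
  shows "\<bar>G m n\<bar> \<le> (1 + K)\<^sup>2 * exp (- \<gamma> * (of_int (n - m) - 2 * M))"
proof -
  have n_right: "n \<in> {b+1..b1}" "b + int l < n"
    using m n M by auto
  have "G m n = - (\<epsilon> * Rr n (b+1) * G b m)"
    using G_right[OF n_right(1) m(1)] G_sym[of m n] Rr_outside[of m n] m by auto
  moreover have "\<bar>Rr n (b+1)\<bar> \<le> exp (- \<gamma> * of_int (n - (b + 1)))"
    using Rr_decay_ordered[of "b+1" n] n_right blocks by auto
  ultimately have "\<bar>G m n\<bar> \<le> K * exp (- \<gamma> * of_int (n - (b + 1)))"
    using abs_coupling_term_le[OF eps(1)] G_boundary_bound[of b m] m by auto
  also have "\<dots> \<le> (1 + K)\<^sup>2 * exp (- \<gamma> * (of_int (n - m) - 2 * M))"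
    using m M K_pos K_le_square by (intro scaled_decay_le) auto
  finally show ?thesis .
qed

lemma G_decay:
  assumes m: "m \<in> {a0..b1}" and n: "n \<in> {a0..b1}" and mn: "3 * M < of_int (n - m)"
    and M: "real l \<le> M" "of_int (b - a + 1) \<le> M"
  shows "\<bar>G m n\<bar> \<le> (1 + K)\<^sup>2 * exp (- \<gamma> * (of_int (n - m) - 2 * M))"
proof -
  have within: "(1 + K) * exp (- \<gamma> * of_int (n - m))
      \<le> (1 + K)\<^sup>2 * exp (- \<gamma> * (of_int (n - m) - 2 * M))"
    using M K_pos K_le_square by (intro scaled_decay_le) auto
  consider "m \<in> {a0..a-1}" "n \<in> {a0..a-1}" | "m \<in> {a0..a-1}" "m < a - int l" "n \<in> {a..b1}"
    | "a - int l \<le> m" "m \<le> b" | "m \<in> {b+1..b1}"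
    using m n by force
  thus ?thesis
  proof cases
    case 1
    thus ?thesis using G_decay_within_left[of m n] mn M within by auto
  next
    case 2
    thus ?thesis using G_decay_across_left M by blast
  next
    case 3
    thus ?thesis using G_decay_from_centre m n mn M by blast
  next
    case 4
    thus ?thesis using G_decay_within_right[of m n] n mn M within by auto
  qed
qed

lemma G_decay_abs:
  assumes "m \<in> {a0..b1}" "n \<in> {a0..b1}" "3 * M < of_int \<bar>m - n\<bar>"
    and M: "real l \<le> M" "of_int (b - a + 1) \<le> M"
  shows "\<bar>G m n\<bar> \<le> (1 + K)\<^sup>2 * exp (- \<gamma> * (of_int \<bar>m - n\<bar> - 2 * M))"
proof (cases "m < n")
  case True
  thus ?thesis using G_decay[of m n M] assms by (simp add: abs_minus_commute)
next
  case False
  thus ?thesis using G_decay[of n m M] G_sym[of m n] assms by simp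
qed

end

lemma Gammap_three_blocks_boundary_columns:
  assumes "a0 < a" "a \<le> b" "b < b1" "j \<in> {a0..b1}"
  shows "Gammap \<epsilon> V {a0..b1} [{a0..a-1}, {a..b}, {b+1..b1}] j (a - 1) = (if j = a then \<epsilon> else 0)"
    and "Gammap \<epsilon> V {a0..b1} [{a0..a-1}, {a..b}, {b+1..b1}] j (b + 1) = (if j = b then \<epsilon> else 0)"
  using assms by (auto simp: Gammap_def Hpart_def Hrestr_def abs_if)

lemma matmul_proj_left:
  assumes "finite S" "x \<in> S"
  shows "matmul S (proj T) X x k = (if x \<in> T then X x k else 0)"
  using assms by (simp add: matmul_def proj_def if_distrib[of "\<lambda>y. y * _"] cong: if_cong)

lemma matmul_single_entry_column:
  assumes "finite S" "c \<in> S" "\<forall>j\<in>S. \<Gamma> j k = (if j = c then \<epsilon> else 0)"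
  shows "matmul S G \<Gamma> x k = \<epsilon> * G x c"
proof -
  have "matmul S G \<Gamma> x k = (\<Sum>j\<in>S. if j = c then \<epsilon> * G x c else 0)"
    unfolding matmul_def using assms(3) by (intro sum.cong) auto
  thus ?thesis using assms(1,2) by simp
qed

lemma column_bound_from_opnorm:
  assumes fin: "finite S" and x: "x \<in> S" "x \<in> T" and k: "k \<in> S" and c: "c \<in> S"
    and column: "\<forall>j\<in>S. \<Gamma> j k = (if j = c then \<epsilon> else 0)" and eps: "0 < \<epsilon>"
    and norm: "opnorm S (matmul S (proj T) (matmul S G \<Gamma>)) \<le> K"
  shows "\<bar>G x c\<bar> \<le> K / \<epsilon>"
proof -
  have "\<bar>matmul S (proj T) (matmul S G \<Gamma>) x k\<bar> \<le> K"
    using abs_entry_le_opnorm[OF fin x(1) k] norm by (rule order_trans)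
  moreover have "matmul S (proj T) (matmul S G \<Gamma>) x k = \<epsilon> * G x c"
    using matmul_proj_left[OF fin x(1)] matmul_single_entry_column[where \<Gamma> = \<Gamma>, OF fin c column] x(2) by simp
  ultimately have "\<epsilon> * \<bar>G x c\<bar> \<le> K"
    using eps by (simp add: abs_mult)
  thus ?thesis
    using eps by (simp add: field_simps)
qed

lemma boundary_columns_bound:
  fixes a0 a b b1 :: int
  assumes blocks: "a0 < a" "a \<le> b" "b < b1" and eps: "0 < \<epsilon>"
    and norm: "opnorm {a0..b1} (matmul {a0..b1} (proj ({a - int l..b + int l} \<inter> {a0..b1}))
                 (matmul {a0..b1} G (Gammap \<epsilon> V {a0..b1} [{a0..a-1}, {a..b}, {b+1..b1}]))) \<le> K"
    and c: "c \<in> {a, b}" and x: "x \<in> {a0..b1}" "a - int l \<le> x" "x \<le> b + int l"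
  shows "\<bar>G x c\<bar> \<le> K / \<epsilon>"
proof -
  have x_T: "x \<in> {a - int l..b + int l} \<inter> {a0..b1}"
    using x by simp
  note column_bound = column_bound_from_opnorm[OF _ x(1) x_T _ _ _ eps norm]
  show ?thesis
  proof (cases "c = a")
    case True
    thus ?thesis
      using column_bound[of "a - 1" a] Gammap_three_blocks_boundary_columns(1)[OF blocks] blocks by simp
  next
    case False
    hence "c = b" using c by simp
    thus ?thesis
      using column_bound[of "b + 1" b] Gammap_three_blocks_boundary_columns(2)[OF blocks] blocks by simp
  qed
qed

lemma three_block_resolvent_intervals:
  assumes blocks: "a0 < a" "a \<le> b" "b < b1" and eps: "0 < \<epsilon>" "\<epsilon> \<le> 1"
    and gamma_nonneg: "0 \<le> \<gamma>" and K_pos: "0 < K"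
    and GFD_left: "GFD \<epsilon> V {a0..a-1} E l \<gamma>" and GFD_right: "GFD \<epsilon> V {b+1..b1} E l \<gamma>"
    and ns: "\<not> in_spec {a0..b1} (Hrestr \<epsilon> V {a0..b1}) E"
    and norm: "opnorm {a0..b1}
         (matmul {a0..b1} (proj ({a - int l..b + int l} \<inter> {a0..b1}))
            (matmul {a0..b1} (resolvent \<epsilon> V {a0..b1} E)
               (Gammap \<epsilon> V {a0..b1} [{a0..a-1}, {a..b}, {b+1..b1}]))) \<le> K"
  shows "three_block_resolvent \<epsilon> \<gamma> K l a0 a b b1
           (resolvent \<epsilon> V {a0..b1} E) (resolvent \<epsilon> V {a0..a-1} E) (resolvent \<epsilon> V {b+1..b1} E)"
proof -
  have ns_left: "\<not> in_spec {a0..a-1} (Hrestr \<epsilon> V {a0..a-1}) E"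
    and ns_right: "\<not> in_spec {b+1..b1} (Hrestr \<epsilon> V {b+1..b1}) E"
    using GFD_left GFD_right unfolding GFD_def by blast+
  show ?thesis
  proof
    show "resolvent \<epsilon> V {a0..b1} E n m = resolvent \<epsilon> V {a0..b1} E m n" for m n
      using resolvent_sym[OF _ ns] by simp
    show "resolvent \<epsilon> V {a0..a-1} E x y = 0" if "y \<notin> {a0..a-1}" for x y
      using resolvent_outside[OF _ ns_left] that by simp
    show "resolvent \<epsilon> V {b+1..b1} E x y = 0" if "y \<notin> {b+1..b1}" for x y
      using resolvent_outside[OF _ ns_right] that by simp
    show "\<bar>resolvent \<epsilon> V {a0..a-1} E x y\<bar> \<le> exp (- \<gamma> * of_int \<bar>x - y\<bar>)"
      if "x \<in> {a0..a-1}" "y \<in> {a0..a-1}" "int l \<le> \<bar>x - y\<bar>" for x y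
      using GFD_left that unfolding GFD_def by blast
    show "\<bar>resolvent \<epsilon> V {b+1..b1} E x y\<bar> \<le> exp (- \<gamma> * of_int \<bar>x - y\<bar>)"
      if "x \<in> {b+1..b1}" "y \<in> {b+1..b1}" "int l \<le> \<bar>x - y\<bar>" for x y
      using GFD_right that unfolding GFD_def by blast
    show "resolvent \<epsilon> V {a0..b1} E m n = resolvent \<epsilon> V {a0..a-1} E m n
            - \<epsilon> * resolvent \<epsilon> V {a0..a-1} E m (a-1) * resolvent \<epsilon> V {a0..b1} E a n"
      if "m \<in> {a0..a-1}" "n \<in> {a0..b1}" for m n
      by (rule geometric_resolvent_identity[OF _ _ _ _ _ ns ns_left _ that])
         (use blocks in \<open>auto simp: Hrestr_def abs_if\<close>)
    show "resolvent \<epsilon> V {a0..b1} E m n = resolvent \<epsilon> V {b+1..b1} E m n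
            - \<epsilon> * resolvent \<epsilon> V {b+1..b1} E m (b+1) * resolvent \<epsilon> V {a0..b1} E b n"
      if "m \<in> {b+1..b1}" "n \<in> {a0..b1}" for m n
      by (rule geometric_resolvent_identity[OF _ _ _ _ _ ns ns_right _ that])
         (use blocks in \<open>auto simp: Hrestr_def abs_if\<close>)
    show "\<bar>resolvent \<epsilon> V {a0..b1} E c x\<bar> \<le> K / \<epsilon>"
      if "c \<in> {a, b}" "x \<in> {a0..b1}" "a - int l \<le> x" "x \<le> b + int l" for c x
      using boundary_columns_bound[OF blocks eps(1) norm that] resolvent_sym[OF _ ns] by simp
  qed (use assms in auto)
qed

lemma decay_rate_loss:
  fixes \<epsilon> \<rho> \<gamma> M d :: real and lh :: nat
  assumes eps: "0 < \<epsilon>" "\<epsilon> < 1/7" and rho: "0 < \<rho>" "\<rho> \<le> 1" and gam: "1 < \<gamma>" "\<gamma> \<le> \<bar>ln \<epsilon>\<bar>"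
    and M: "\<bar>ln \<rho>\<bar> \<le> M" "1 \<le> M" and d: "0 < lh" "real lh \<le> d"
  shows "(1 + 2 / \<rho>)\<^sup>2 * exp (- \<gamma> * (d - 2 * M))
           \<le> exp (- (\<gamma> - 6 * \<bar>ln \<epsilon>\<bar> * M / real lh) * d)"
proof -
  define L where "L = \<bar>ln \<epsilon>\<bar>"
  have "1 / \<rho> = exp (- ln \<rho>)"
    using rho by (simp add: exp_minus inverse_eq_divide)
  also have "\<dots> \<le> exp M"
    using M by simp
  finally have "1 + 2 / \<rho> \<le> 3 * exp M"
    using rho by (simp add: field_simps)
  hence square: "(1 + 2 / \<rho>)\<^sup>2 \<le> 9 * exp (2 * M)"
    using rho power_mono[of "1 + 2 / \<rho>" "3 * exp M" 2] by (simp add: exp_double power_mult_distrib)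
  have "9 \<le> exp (2 * L)"
  proof -
    have "exp L = 1 / \<epsilon>"
      using eps unfolding L_def by (simp add: abs_if ln_div exp_minus inverse_eq_divide)
    moreover have "7 < 1 / \<epsilon>"
      using eps by (simp add: field_simps)
    ultimately have "7 \<le> exp L"
      by simp
    thus ?thesis
      using power_mono[of 7 "exp L" 2] by (simp add: exp_double)
  qed
  hence "9 * exp (2 * M) \<le> exp (2 * L) * exp (2 * M)"
    by (intro mult_right_mono) auto
  with square have "(1 + 2 / \<rho>)\<^sup>2 \<le> exp (2 * L + 2 * M)"
    unfolding exp_add by (rule order.trans)
  hence "(1 + 2 / \<rho>)\<^sup>2 * exp (- \<gamma> * (d - 2 * M)) \<le> exp (2 * L + 2 * M) * exp (- \<gamma> * (d - 2 * M))"
    by (rule mult_right_mono) simp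
  also have "\<dots> = exp (2 * L + 2 * M + - \<gamma> * (d - 2 * M))"
    by (rule exp_add[symmetric])
  also have "\<dots> \<le> exp (- (\<gamma> - 6 * L * M / real lh) * d)"
  proof -
    have "1 \<le> d / real lh"
      using d by simp
    hence "L * M * 1 \<le> L * M * (d / real lh)"
      using gam M unfolding L_def by (intro mult_left_mono) auto
    moreover have "L * 1 \<le> L * M" "1 * M \<le> L * M" "\<gamma> * M \<le> L * M"
      using gam M unfolding L_def by (intro mult_left_mono mult_right_mono; simp)+
    ultimately have "2 * L + 2 * M + - \<gamma> * (d - 2 * M) \<le> - \<gamma> * d + 6 * (L * M * (d / real lh))"
      by (simp only: ring_distribs)
    also have "\<dots> = - (\<gamma> - 6 * L * M / real lh) * d"
      by (simp add: algebra_simps)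
    finally show ?thesis
      by simp
  qed
  finally show ?thesis
    by (simp only: L_def)
qed

theorem lemmaA2:
  fixes v :: "real \<Rightarrow> real" and \<alpha> \<theta> E \<epsilon> \<rho> \<gamma> :: real and l lh :: nat
    and a0 a b b1 :: int
  defines "V \<equiv> pot v \<alpha> \<theta>"
  defines "M \<equiv> max (real l) \<bar>ln \<rho>\<bar>"
  defines "\<gamma>c \<equiv> \<gamma> - 6 * \<bar>ln \<epsilon>\<bar> * M / real lh"
  assumes v_bdd: "\<exists>B. \<forall>x. \<bar>v x\<bar> \<le> B"
    and eps: "0 < \<epsilon>" "\<epsilon> < 1/7"
    and rho: "0 < \<rho>" "\<rho> < 1/2"
    and gam: "1 < \<gamma>" "\<gamma> \<le> \<bar>ln \<epsilon>\<bar>"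
    and lh_bd: "real lh > 16 * \<bar>ln \<epsilon>\<bar> * M"
    and part: "a0 < a" "a \<le> b" "b < b1"
    and H1: "GFD \<epsilon> V {a0..a-1} E l \<gamma>" "GFD \<epsilon> V {b+1..b1} E l \<gamma>"
    and H2: "\<not> in_spec {a0..b1} (Hrestr \<epsilon> V {a0..b1}) E"
      "opnorm {a0..b1}
         (matmul {a0..b1} (proj ({a - int l..b + int l} \<inter> {a0..b1}))
            (matmul {a0..b1} (resolvent \<epsilon> V {a0..b1} E)
               (Gammap \<epsilon> V {a0..b1} [{a0..a-1}, {a..b}, {b+1..b1}])))
       \<le> 2 / \<rho>"
    and H3: "real (card {a..b}) \<le> M"
  shows "GFD \<epsilon> V {a0..b1} E lh \<gamma>c"
proof -
  interpret green: three_block_resolvent \<epsilon> \<gamma> "2 / \<rho>" l a0 a b b1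
    "resolvent \<epsilon> V {a0..b1} E" "resolvent \<epsilon> V {a0..a-1} E" "resolvent \<epsilon> V {b+1..b1} E"
    by (rule three_block_resolvent_intervals[OF part _ _ _ _ H1 H2]) (use eps rho gam in auto)
  have M_bounds: "real l \<le> M" "of_int (b - a + 1) \<le> M" "\<bar>ln \<rho>\<bar> \<le> M" "1 \<le> M"
    using H3 part unfolding M_def by auto
  have "1 * M \<le> \<bar>ln \<epsilon>\<bar> * M"
    using gam M_bounds(4) by (intro mult_right_mono) auto
  hence "3 * M < real lh"
    using lh_bd M_bounds(4) by linarith
  hence decay: "\<bar>resolvent \<epsilon> V {a0..b1} E m n\<bar> \<le> exp (- \<gamma>c * of_int \<bar>m - n\<bar>)"
    if mn: "m \<in> {a0..b1}" "n \<in> {a0..b1}" "int lh \<le> \<bar>m - n\<bar>" for m n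
  proof -
    have dist: "real lh \<le> of_int \<bar>m - n\<bar>" "0 < lh"
      using \<open>3 * M < real lh\<close> M_bounds(4) mn(3) of_int_le_iff[of "int lh" "\<bar>m - n\<bar>"] by auto
    have "\<bar>resolvent \<epsilon> V {a0..b1} E m n\<bar> \<le> (1 + 2 / \<rho>)\<^sup>2 * exp (- \<gamma> * (of_int \<bar>m - n\<bar> - 2 * M))"
      using green.G_decay_abs[OF mn(1,2) _ M_bounds(1,2)] dist \<open>3 * M < real lh\<close> by simp
    also have "\<dots> \<le> exp (- \<gamma>c * of_int \<bar>m - n\<bar>)"
      unfolding \<gamma>c_def using decay_rate_loss[OF eps rho(1) _ gam M_bounds(3,4) dist(2,1)] rho(2) by simp
    finally show ?thesis .
  qed
  show ?thesis
    unfolding GFD_def using H2(1) decay by blast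
qed

end
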